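(* Let $\mathcal H$ be a real Hilbert space and $f\colon\mathcal H\to\left]-\infty,+\infty\right]$ proper, lower semicontinuous, convex, with $\operatorname{int}\operatorname{dom} f\neq\varnothing$, Gâteaux differentiable on $\operatorname{int}\operatorname{dom} f$, and essentially strictly convex. Let $T_1,\dots,T_m\colon\mathcal H\to\mathcal H$ with $\operatorname{int}\operatorname{dom} f\cap\bigcap_{i=1}^m\operatorname{Fix}T_i\neq\varnothing$, and let $\mathcal S(x)=\{x,T_1x,\dots,T_mx\}$. Then $$\operatorname{Fix}\overrightarrow{CC}_{\mathcal S}=\operatorname{int}\operatorname{dom} f\cap\bigcap_{i=1}^m\operatorname{Fix}T_i \quad\text{and}\quad \operatorname{Fix}\overleftarrow{CC}_{\mathcal S}=\operatorname{int}\operatorname{dom} f\cap\bigcap_{i=1}^m\operatorname{Fix}T_i,$$ where for a set-valued map $A$, $\operatorname{Fix}A=\{x: x\in A(x)\}$.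
   Context: Bregman distance: $D_f(x,y)=f(x)-f(y)-\langle\nabla f(y),x-y\rangle$ if $y\in\operatorname{int}\operatorname{dom} f$, $+\infty$ otherwise. Essentially strictly convex: $(\partial f)^{-1}$ is locally bounded on its domain and $f$ is strictly convex on every convex subset of $\operatorname{dom}\partial f$. Forward Bregman circumcenter mapping: for $y\in\mathcal H$ with $\mathcal S(y)\subseteq\operatorname{dom} f$, $\overrightarrow{CC}_{\mathcal S}(y)=\{v\in\operatorname{aff}(\mathcal S(y))\cap\operatorname{int}\operatorname{dom} f: D_f(y,v)=D_f(T_1y,v)=\cdots=D_f(T_my,v)\}$ (empty if $\mathcal S(y)\not\subseteq\operatorname{dom}f$). Backward Bregman circumcenter mapping: for $y\in\mathcal H$ with $\mathcal S(y)\subseteq\operatorname{int}\operatorname{dom} f$, $\overleftarrow{CC}_{\mathcal S}(y)=\{p\in\operatorname{aff}(\mathcal S(y))\cap\operatorname{dom} f: D_f(p,y)=D_f(p,T_1y)=\cdots=D_f(p,T_my)\}$ (empty if $\mathcal S(y)\not\subseteq\operatorname{int}\operatorname{dom} f$). Here $\operatorname{aff}$ denotes affine hull. *)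

theory Defs
  imports "HOL-Analysis.Analysis"
begin

definition edom :: "('a \<Rightarrow> ereal) \<Rightarrow> 'a set" where
  "edom f = {x. f x < \<infinity>}"

definition proper_fun :: "('a \<Rightarrow> ereal) \<Rightarrow> bool" where
  "proper_fun f \<longleftrightarrow> (\<exists>x. f x < \<infinity>) \<and> (\<forall>x. f x \<noteq> -\<infinity>)"

definition lsc_fun :: "('a::topological_space \<Rightarrow> ereal) \<Rightarrow> bool" where
  "lsc_fun f \<longleftrightarrow> (\<forall>c::ereal. closed {x. f x \<le> c})"

definition convex_efun :: "('a::real_vector \<Rightarrow> ereal) \<Rightarrow> bool" where
  "convex_efun f \<longleftrightarrow> (\<forall>x y. \<forall>t::real. 0 < t \<and> t < 1 \<longrightarrow>
      f (t *\<^sub>R x + (1 - t) *\<^sub>R y) \<le> ereal t * f x + ereal (1 - t) * f y)"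

definition strictly_convex_on_efun :: "'a::real_vector set \<Rightarrow> ('a \<Rightarrow> ereal) \<Rightarrow> bool" where
  "strictly_convex_on_efun C f \<longleftrightarrow> (\<forall>x\<in>C. \<forall>y\<in>C. \<forall>t::real. x \<noteq> y \<and> 0 < t \<and> t < 1 \<longrightarrow>
      f (t *\<^sub>R x + (1 - t) *\<^sub>R y) < ereal t * f x + ereal (1 - t) * f y)"

definition has_gateaux_gradient :: "('a::real_inner \<Rightarrow> ereal) \<Rightarrow> 'a \<Rightarrow> 'a \<Rightarrow> bool" where
  "has_gateaux_gradient f v y \<longleftrightarrow> (\<forall>h. ((\<lambda>t::real. (real_of_ereal (f (y + t *\<^sub>R h)) - real_of_ereal (f y)) / t)
      \<longlongrightarrow> inner v h) (at 0))"

definition gateaux_differentiable_at :: "('a::real_inner \<Rightarrow> ereal) \<Rightarrow> 'a \<Rightarrow> bool" where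
  "gateaux_differentiable_at f y \<longleftrightarrow> (\<exists>v. has_gateaux_gradient f v y)"

definition grad :: "('a::real_inner \<Rightarrow> ereal) \<Rightarrow> 'a \<Rightarrow> 'a" where
  "grad f y = (SOME v. has_gateaux_gradient f v y)"

definition subdiff :: "('a::real_inner \<Rightarrow> ereal) \<Rightarrow> 'a \<Rightarrow> 'a set" where
  "subdiff f x = {u. f x < \<infinity> \<and> (\<forall>y. f x + ereal (inner u (y - x)) \<le> f y)}"

definition essentially_strictly_convex :: "('a::real_inner \<Rightarrow> ereal) \<Rightarrow> bool" where
  "essentially_strictly_convex f \<longleftrightarrow>
     (\<comment> \<open>(\<partial>f)^{-1} is locally bounded on its domain\<close>
      (\<forall>u. (\<exists>x. u \<in> subdiff f x) \<longrightarrow>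
          (\<exists>e>0. bounded {x. \<exists>w\<in>ball u e. w \<in> subdiff f x})) \<and>
      (\<forall>C. convex C \<and> C \<subseteq> {x. subdiff f x \<noteq> {}} \<longrightarrow> strictly_convex_on_efun C f))"

definition bregman :: "('a::real_inner \<Rightarrow> ereal) \<Rightarrow> 'a \<Rightarrow> 'a \<Rightarrow> ereal" where
  "bregman f x y = (if y \<in> interior (edom f)
      then f x - f y - ereal (inner (grad f y) (x - y)) else \<infinity>)"

definition Fix :: "('a \<Rightarrow> 'a) \<Rightarrow> 'a set" where
  "Fix T = {x. T x = x}"

definition Fix_set :: "('a \<Rightarrow> 'a set) \<Rightarrow> 'a set" where
  "Fix_set A = {x. x \<in> A x}"

definition Sset :: "(nat \<Rightarrow> 'a \<Rightarrow> 'a) \<Rightarrow> nat \<Rightarrow> 'a \<Rightarrow> 'a set" where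
  "Sset T m y = insert y ((\<lambda>i. T i y) ` {1..m})"

definition fwd_CC :: "('a::real_inner \<Rightarrow> ereal) \<Rightarrow> (nat \<Rightarrow> 'a \<Rightarrow> 'a) \<Rightarrow> nat \<Rightarrow> 'a \<Rightarrow> 'a set" where
  "fwd_CC f T m y = (if Sset T m y \<subseteq> edom f then
      {v \<in> affine hull (Sset T m y) \<inter> interior (edom f).
         \<forall>i\<in>{1..m}. bregman f y v = bregman f (T i y) v}
     else {})"

definition bwd_CC :: "('a::real_inner \<Rightarrow> ereal) \<Rightarrow> (nat \<Rightarrow> 'a \<Rightarrow> 'a) \<Rightarrow> nat \<Rightarrow> 'a \<Rightarrow> 'a set" where
  "bwd_CC f T m y = (if Sset T m y \<subseteq> interior (edom f) then
      {p \<in> affine hull (Sset T m y) \<inter> edom f.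
         \<forall>i\<in>{1..m}. bregman f p y = bregman f p (T i y)}
     else {})"

end

theory Submission
  imports Defs
begin

text \<open>If x is a fixed point of either circumcenter map, then every point T_i x has the
  same Bregman distance to (resp. from) x as x itself, namely 0. For a convex f, the Gateaux
  gradient g at y is a subgradient, so D_f(x, y) = 0 says that the affine minorant
  z \<mapsto> f y + \<langle>g, z - y\<rangle> touches f at x as well as at y; by convexity f coincides with this
  minorant on the whole segment [y, x], every point of which therefore has g as subgradient.
  Essential strict convexity makes f strictly convex on that segment, which is impossible for an
  affine function unless x = y. Conversely, a common fixed point x has S(x) = {x}.\<close>

lemma proper_fun_finite:
  assumes "proper_fun f" and "f x < \<infinity>"
  obtains a where "f x = ereal a"
  using assms unfolding proper_fun_def by (cases "f x") auto

lemma gateaux_gradient_in_subdiff: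
  fixes f :: "'a::real_inner \<Rightarrow> ereal"
  assumes cf: "convex_efun f" and pf: "proper_fun f" and fy_fin: "f y < \<infinity>"
    and gg: "has_gateaux_gradient f g y"
  shows "g \<in> subdiff f y"
  unfolding subdiff_def
proof (intro CollectI conjI allI fy_fin)
  fix z
  obtain a where fy: "f y = ereal a" using pf fy_fin by (rule proper_fun_finite)
  show "f y + ereal (inner g (z - y)) \<le> f z"
  proof (cases "f z = \<infinity>")
    case False
    then obtain b where fz: "f z = ereal b" using pf by (auto elim: proper_fun_finite)
    define h where "h = z - y"
    define Q where "Q = (\<lambda>t::real. (real_of_ereal (f (y + t *\<^sub>R h)) - a) / t)"
    have "(Q \<longlongrightarrow> inner g h) (at 0)"
      using gg unfolding has_gateaux_gradient_def Q_def fy by simp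
    hence lim: "(Q \<longlongrightarrow> inner g h) (at_right 0)"
      by (rule filterlim_mono) (auto simp: at_le)
    \<comment> \<open>convexity bounds every difference quotient in direction z - y by f z - f y\<close>
    have "eventually (\<lambda>t. Q t \<le> b - a) (at_right (0::real))"
      unfolding eventually_at_right_field
    proof (intro exI[of _ 1] conjI allI impI)
      fix t :: real assume t: "0 < t" "t < 1"
      have "y + t *\<^sub>R h = t *\<^sub>R z + (1 - t) *\<^sub>R y" by (simp add: h_def algebra_simps)
      hence "f (y + t *\<^sub>R h) \<le> ereal (t * b + (1 - t) * a)"
        using cf t unfolding convex_efun_def by (metis fy fz times_ereal.simps(1) plus_ereal.simps(1))
      moreover obtain r where r: "f (y + t *\<^sub>R h) = ereal r"
        using pf calculation unfolding proper_fun_def by (cases "f (y + t *\<^sub>R h)") auto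
      ultimately have "r - a \<le> (b - a) * t" by (simp add: algebra_simps)
      thus "Q t \<le> b - a" using t by (simp add: Q_def r divide_le_eq)
    qed simp
    hence "inner g h \<le> b - a"
      using tendsto_le[OF trivial_limit_at_right_real tendsto_const lim] by blast
    thus ?thesis by (simp add: fy fz h_def)
  qed simp
qed

lemma subdiff_along_touching_segment:
  fixes f :: "'a::real_inner \<Rightarrow> ereal"
  assumes cf: "convex_efun f" and pf: "proper_fun f" and g: "g \<in> subdiff f y"
    and fx: "f x = f y + ereal (inner g (x - y))"
    and z: "z \<in> closed_segment y x"
  shows "f z = f y + ereal (inner g (z - y))" and "g \<in> subdiff f z"
proof -
  have minorant: "f y + ereal (inner g (w - y)) \<le> f w" for w
    using g by (simp add: subdiff_def)
  obtain a where fy: "f y = ereal a"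
    using pf g by (auto simp: subdiff_def elim: proper_fun_finite)
  obtain u where u: "0 \<le> u" "u \<le> 1" and zu: "z = (1 - u) *\<^sub>R y + u *\<^sub>R x"
    using z by (auto simp: in_segment)
  have "z - y = u *\<^sub>R (x - y)" by (simp add: zu algebra_simps)
  hence zy: "inner g (z - y) = u * inner g (x - y)" by simp
  have "f z \<le> f y + ereal (inner g (z - y))"
  proof (cases "u = 0 \<or> u = 1")
    case True
    then show ?thesis using fx zu by auto
  next
    case False
    with u have "0 < u" "u < 1" by auto
    moreover have "z = u *\<^sub>R x + (1 - u) *\<^sub>R y" using zu by (simp add: add.commute)
    ultimately have "f z \<le> ereal u * f x + ereal (1 - u) * f y"
      using cf unfolding convex_efun_def by blast
    also have "\<dots> = f y + ereal (inner g (z - y))"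
      unfolding zy by (simp add: fx fy algebra_simps)
    finally show ?thesis .
  qed
  then show fz: "f z = f y + ereal (inner g (z - y))"
    using minorant[of z] by (rule antisym)
  show "g \<in> subdiff f z"
    unfolding subdiff_def
  proof (intro CollectI conjI allI)
    show "f z < \<infinity>" by (simp add: fz fy)
  next
    fix w
    have "f z + ereal (inner g (w - z)) = f y + ereal (inner g (w - y))"
      by (simp add: fz fy inner_diff_right)
    also have "\<dots> \<le> f w" by (rule minorant)
    finally show "f z + ereal (inner g (w - z)) \<le> f w" .
  qed
qed

lemma bregman_eq_0_imp_eq:
  fixes f :: "'a::real_inner \<Rightarrow> ereal"
  assumes cf: "convex_efun f" and pf: "proper_fun f"
    and es: "essentially_strictly_convex f"
    and yi: "y \<in> interior (edom f)" and gd: "gateaux_differentiable_at f y"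
    and D0: "bregman f x y = 0"
  shows "x = y"
proof (rule ccontr)
  assume ne: "x \<noteq> y"
  define g where "g = grad f y"
  have "f y < \<infinity>" using yi interior_subset by (auto simp: edom_def)
  then obtain a where fy: "f y = ereal a" using pf by (auto elim: proper_fun_finite)
  have "has_gateaux_gradient f g y"
    using gd unfolding gateaux_differentiable_at_def g_def grad_def by (rule someI_ex)
  hence g: "g \<in> subdiff f y" by (rule gateaux_gradient_in_subdiff[OF cf pf \<open>f y < \<infinity>\<close>])
  have fx: "f x = f y + ereal (inner g (x - y))"
    using D0 yi fy by (cases "f x") (auto simp: bregman_def g_def)
  note on_segment = subdiff_along_touching_segment[OF cf pf g fx]
  have "strictly_convex_on_efun (closed_segment y x) f"
    using es on_segment(2) unfolding essentially_strictly_convex_def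
    by (metis (mono_tags, lifting) convex_closed_segment empty_iff mem_Collect_eq subsetI)
  hence "\<And>p q t. \<lbrakk>p \<in> closed_segment y x; q \<in> closed_segment y x; p \<noteq> q; 0 < t; t < 1\<rbrakk> \<Longrightarrow>
      f (t *\<^sub>R p + (1 - t) *\<^sub>R q) < ereal t * f p + ereal (1 - t) * f q"
    unfolding strictly_convex_on_efun_def by blast
  hence "f ((1/2) *\<^sub>R x + (1 - 1/2) *\<^sub>R y) < ereal (1/2) * f x + ereal (1 - 1/2) * f y"
    by (rule _ ends_in_segment(2) ends_in_segment(1)) (simp_all add: ne)
  moreover have "(1/2) *\<^sub>R x + (1 - 1/2) *\<^sub>R y \<in> closed_segment y x"
    unfolding in_segment by (intro exI[of _ "1/2"]) (simp add: add.commute)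
  moreover have "inner g ((1/2) *\<^sub>R x + (1 - 1/2) *\<^sub>R y - y) = inner g (x - y) / 2"
    by (simp add: algebra_simps inner_diff_right)
  ultimately show False
    using on_segment(1) by (simp add: fx fy field_simps)
qed

lemma bregman_self_eq_0:
  assumes "proper_fun f" and "y \<in> interior (edom f)"
  shows "bregman f y y = 0"
proof -
  have "f y < \<infinity>" using assms(2) interior_subset by (auto simp: edom_def)
  then obtain a where "f y = ereal a" using assms(1) by (auto elim: proper_fun_finite)
  thus ?thesis using assms(2) by (simp add: bregman_def)
qed

lemma Sset_common_fixpoint:
  assumes "x \<in> (\<Inter>i\<in>{1..m}. Fix (T i))"
  shows "Sset T m x = {x}"
  using assms by (auto simp: Sset_def Fix_def)

lemma Fix_set_fwd_CC:
  assumes cf: "convex_efun f" and pf: "proper_fun f"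
    and gd: "\<forall>y\<in>interior (edom f). gateaux_differentiable_at f y"
    and es: "essentially_strictly_convex f"
  shows "Fix_set (fwd_CC f T m) = interior (edom f) \<inter> (\<Inter>i\<in>{1..m}. Fix (T i))"
proof (intro equalityI subsetI)
  fix x assume "x \<in> Fix_set (fwd_CC f T m)"
  then have xi: "x \<in> interior (edom f)"
    and D: "\<forall>i\<in>{1..m}. bregman f x x = bregman f (T i x) x"
    unfolding Fix_set_def fwd_CC_def by (auto split: if_splits)
  have "T i x = x" if "i \<in> {1..m}" for i
    using bregman_eq_0_imp_eq[OF cf pf es xi] gd xi D that bregman_self_eq_0[OF pf xi] by metis
  with xi show "x \<in> interior (edom f) \<inter> (\<Inter>i\<in>{1..m}. Fix (T i))" by (auto simp: Fix_def)
next
  fix x assume x: "x \<in> interior (edom f) \<inter> (\<Inter>i\<in>{1..m}. Fix (T i))"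
  with interior_subset have "x \<in> edom f" by blast
  with x Sset_common_fixpoint[of x] show "x \<in> Fix_set (fwd_CC f T m)"
    by (auto simp: Fix_set_def fwd_CC_def Fix_def hull_inc)
qed

lemma Fix_set_bwd_CC:
  assumes cf: "convex_efun f" and pf: "proper_fun f"
    and gd: "\<forall>y\<in>interior (edom f). gateaux_differentiable_at f y"
    and es: "essentially_strictly_convex f"
  shows "Fix_set (bwd_CC f T m) = interior (edom f) \<inter> (\<Inter>i\<in>{1..m}. Fix (T i))"
proof (intro equalityI subsetI)
  fix x assume "x \<in> Fix_set (bwd_CC f T m)"
  then have S: "Sset T m x \<subseteq> interior (edom f)"
    and D: "\<forall>i\<in>{1..m}. bregman f x x = bregman f x (T i x)"
    unfolding Fix_set_def bwd_CC_def by (auto split: if_splits)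
  have xi: "x \<in> interior (edom f)" using S by (auto simp: Sset_def)
  have "T i x = x" if i: "i \<in> {1..m}" for i
  proof -
    have Ti: "T i x \<in> interior (edom f)" using S i by (auto simp: Sset_def)
    show ?thesis
      using bregman_eq_0_imp_eq[OF cf pf es Ti] gd Ti D i bregman_self_eq_0[OF pf xi] by metis
  qed
  with xi show "x \<in> interior (edom f) \<inter> (\<Inter>i\<in>{1..m}. Fix (T i))" by (auto simp: Fix_def)
next
  fix x assume x: "x \<in> interior (edom f) \<inter> (\<Inter>i\<in>{1..m}. Fix (T i))"
  with interior_subset have "x \<in> edom f" by blast
  with x Sset_common_fixpoint[of x] show "x \<in> Fix_set (bwd_CC f T m)"
    by (auto simp: Fix_set_def bwd_CC_def Fix_def hull_inc)
qed

theorem lemma4p6: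
  fixes f :: "'a::{real_inner, complete_space} \<Rightarrow> ereal"
    and T :: "nat \<Rightarrow> 'a \<Rightarrow> 'a"
    and m :: nat
  assumes "1 \<le> m"
    and "proper_fun f" and "lsc_fun f" and "convex_efun f"
    and "interior (edom f) \<noteq> {}"
    and "\<forall>y\<in>interior (edom f). gateaux_differentiable_at f y"
    and "essentially_strictly_convex f"
    and "interior (edom f) \<inter> (\<Inter>i\<in>{1..m}. Fix (T i)) \<noteq> {}"
  shows "Fix_set (fwd_CC f T m) = interior (edom f) \<inter> (\<Inter>i\<in>{1..m}. Fix (T i)) \<and>
         Fix_set (bwd_CC f T m) = interior (edom f) \<inter> (\<Inter>i\<in>{1..m}. Fix (T i))"
  using Fix_set_fwd_CC[OF assms(4,2,6,7)] Fix_set_bwd_CC[OF assms(4,2,6,7)] by blast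

end
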